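(* Let $\mathcal A\in\mathbb R^{n_1}\otimes\cdots\otimes\mathbb R^{n_k}$, $1\le s\le k$, $r\le\min\{n_1,\dots,n_k\}$. A point $(U,\mathbf x)\in W_{\mathbf n,r,*}$ is a critical point of $g(U,\mathbf x)=\frac12\|\mathcal A-(U^{(1)},\dots,U^{(k)})\cdot\operatorname{diag}_k(\mathbf x)\|^2$ on $W_{\mathbf n,r,*}$ if and only if $(U,\operatorname{diag}_k(\mathbf x))$ is a KKT point of problem (LRPOTA).
   Context: $\mathrm V(r,n)=\{U\in\mathbb R^{n\times r}:U^{\mathsf T}U=I_r\}$; $\mathrm B(r,n)$: $n\times r$ real matrices with unit columns; $\mathrm{OB}(r,n)$: full-column-rank elements of $\mathrm B(r,n)$. $W_{\mathbf n,r,*}=\mathrm V(r,n_1)\times\cdots\times\mathrm V(r,n_s)\times\mathrm{OB}(r,n_{s+1})\times\cdots\times\mathrm{OB}(r,n_k)\times(\mathbb R\setminus\{0\})^r$, a smooth manifold; critical points of $g$ on it are points where its Riemannian gradient vanishes. $(U^{(1)},\dots,U^{(k)})\cdot\operatorname{diag}_k(\mathbf x)=\sum_jx_j\mathbf u^{(1)}_j\otimes\cdots\otimes\mathbf u^{(k)}_j$. Problem (LRPOTA): minimize $G(U,\lambda)=\|\mathcal A-(U^{(1)},\dots,U^{(k)})\cdot\operatorname{diag}_k(\lambda)\|^2$ over $\lambda\in\mathbb R^r$, $U^{(i)}\in\mathrm V(r,n_i)$ ($i\le s$), $U^{(i)}\in\mathrm B(r,n_i)$ ($i>s$). A feasible $(U,\operatorname{diag}_k(\lambda))$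 is a KKT point if there exist symmetric $P_1,\dots,P_s\in\mathbb R^{r\times r}$ and $\mathbf p_{s+1},\dots,\mathbf p_k\in\mathbb R^r$ with $\nabla_{U^{(i)}}G(U,\lambda)=U^{(i)}P_i$ for $i\le s$, $\nabla_{U^{(i)}}G(U,\lambda)=U^{(i)}\operatorname{diag}(\mathbf p_i)$ for $i>s$, and $\nabla_\lambda G(U,\lambda)=0$ (Lagrange stationarity for the constraints $(U^{(i)})^{\mathsf T}U^{(i)}=I_r$ and unit-norm columns). *)

theory Defs
  imports "HOL-Analysis.Analysis"
begin

text \<open>Modes are 0-indexed: mode i ranges over 0..<k (paper: i+1).
  Factor matrices: U i a j = entry (a,j) of U^(i+1), a < n i, j < r.
  Tensors: functions on multi-indices in tidx k n.\<close>

definition tidx :: "nat \<Rightarrow> (nat \<Rightarrow> nat) \<Rightarrow> (nat \<Rightarrow> nat) set" where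
  "tidx k n = PiE {..<k} (\<lambda>i. {..<n i})"

definition cpd :: "nat \<Rightarrow> nat \<Rightarrow> (nat \<Rightarrow> nat \<Rightarrow> nat \<Rightarrow> real) \<Rightarrow> (nat \<Rightarrow> real)
                    \<Rightarrow> (nat \<Rightarrow> nat) \<Rightarrow> real" where
  "cpd k r U x = (\<lambda>\<iota>. \<Sum>j<r. x j * (\<Prod>i<k. U i (\<iota> i) j))"

definition LG :: "nat \<Rightarrow> (nat \<Rightarrow> nat) \<Rightarrow> nat \<Rightarrow> ((nat \<Rightarrow> nat) \<Rightarrow> real)
                   \<Rightarrow> (nat \<Rightarrow> nat \<Rightarrow> nat \<Rightarrow> real) \<Rightarrow> (nat \<Rightarrow> real) \<Rightarrow> real" where
  "LG k n r A U x = (\<Sum>\<iota>\<in>tidx k n. (A \<iota> - cpd k r U x \<iota>)^2)"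

definition lg :: "nat \<Rightarrow> (nat \<Rightarrow> nat) \<Rightarrow> nat \<Rightarrow> ((nat \<Rightarrow> nat) \<Rightarrow> real)
                   \<Rightarrow> (nat \<Rightarrow> nat \<Rightarrow> nat \<Rightarrow> real) \<Rightarrow> (nat \<Rightarrow> real) \<Rightarrow> real" where
  "lg k n r A U x = LG k n r A U x / 2"

definition col_inner :: "(nat \<Rightarrow> nat) \<Rightarrow> (nat \<Rightarrow> nat \<Rightarrow> nat \<Rightarrow> real) \<Rightarrow> nat \<Rightarrow> nat \<Rightarrow> nat \<Rightarrow> real" where
  "col_inner n U i j l = (\<Sum>a<n i. U i a j * U i a l)"

definition is_stiefel :: "(nat \<Rightarrow> nat) \<Rightarrow> nat \<Rightarrow> (nat \<Rightarrow> nat \<Rightarrow> nat \<Rightarrow> real) \<Rightarrow> nat \<Rightarrow> bool" where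
  "is_stiefel n r U i = (\<forall>j<r. \<forall>l<r. col_inner n U i j l = (if j = l then 1 else 0))"

definition is_unitcol :: "(nat \<Rightarrow> nat) \<Rightarrow> nat \<Rightarrow> (nat \<Rightarrow> nat \<Rightarrow> nat \<Rightarrow> real) \<Rightarrow> nat \<Rightarrow> bool" where
  "is_unitcol n r U i = (\<forall>j<r. col_inner n U i j j = 1)"

definition full_col_rank :: "(nat \<Rightarrow> nat) \<Rightarrow> nat \<Rightarrow> (nat \<Rightarrow> nat \<Rightarrow> nat \<Rightarrow> real) \<Rightarrow> nat \<Rightarrow> bool" where
  "full_col_rank n r U i =
     (\<forall>c. (\<forall>a<n i. (\<Sum>j<r. c j * U i a j) = 0) \<longrightarrow> (\<forall>j<r. c j = 0))"

definition in_W :: "nat \<Rightarrow> nat \<Rightarrow> (nat \<Rightarrow> nat) \<Rightarrow> nat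
                    \<Rightarrow> (nat \<Rightarrow> nat \<Rightarrow> nat \<Rightarrow> real) \<Rightarrow> (nat \<Rightarrow> real) \<Rightarrow> bool" where
  "in_W k s n r U x =
     ((\<forall>i<s. is_stiefel n r U i) \<and>
      (\<forall>i. s \<le> i \<and> i < k \<longrightarrow> is_unitcol n r U i \<and> full_col_rank n r U i) \<and>
      (\<forall>j<r. x j \<noteq> 0))"

text \<open>Critical point of g on the manifold W: the differential of g vanishes on the tangent
  space, i.e. the derivative of g along every curve in W through the point, differentiable
  at the point, is zero (equivalently, the Riemannian gradient vanishes).\<close>
definition critical_point_W :: "nat \<Rightarrow> nat \<Rightarrow> (nat \<Rightarrow> nat) \<Rightarrow> nat \<Rightarrow> ((nat \<Rightarrow> nat) \<Rightarrow> real)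
                    \<Rightarrow> (nat \<Rightarrow> nat \<Rightarrow> nat \<Rightarrow> real) \<Rightarrow> (nat \<Rightarrow> real) \<Rightarrow> bool" where
  "critical_point_W k s n r A U x =
     (in_W k s n r U x \<and>
      (\<forall>(\<epsilon>::real) (Uc :: real \<Rightarrow> nat \<Rightarrow> nat \<Rightarrow> nat \<Rightarrow> real) (xc :: real \<Rightarrow> nat \<Rightarrow> real).
         \<epsilon> > 0 \<longrightarrow>
         (\<forall>t. \<bar>t\<bar> < \<epsilon> \<longrightarrow> in_W k s n r (Uc t) (xc t)) \<longrightarrow>
         (\<forall>i<k. \<forall>a<n i. \<forall>j<r. Uc 0 i a j = U i a j) \<longrightarrow>
         (\<forall>j<r. xc 0 j = x j) \<longrightarrow>
         (\<forall>i<k. \<forall>a<n i. \<forall>j<r. (\<lambda>t. Uc t i a j) differentiable (at 0)) \<longrightarrow>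
         (\<forall>j<r. (\<lambda>t. xc t j) differentiable (at 0)) \<longrightarrow>
         ((\<lambda>t. lg k n r A (Uc t) (xc t)) has_real_derivative 0) (at 0)))"

definition gradU :: "nat \<Rightarrow> (nat \<Rightarrow> nat) \<Rightarrow> nat \<Rightarrow> ((nat \<Rightarrow> nat) \<Rightarrow> real)
                    \<Rightarrow> (nat \<Rightarrow> nat \<Rightarrow> nat \<Rightarrow> real) \<Rightarrow> (nat \<Rightarrow> real) \<Rightarrow> nat \<Rightarrow> nat \<Rightarrow> nat \<Rightarrow> real" where
  "gradU k n r A U x i a j =
     deriv (\<lambda>t. LG k n r A (U(i := (U i)(a := (U i a)(j := U i a j + t)))) x) 0"

definition gradx :: "nat \<Rightarrow> (nat \<Rightarrow> nat) \<Rightarrow> nat \<Rightarrow> ((nat \<Rightarrow> nat) \<Rightarrow> real)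
                    \<Rightarrow> (nat \<Rightarrow> nat \<Rightarrow> nat \<Rightarrow> real) \<Rightarrow> (nat \<Rightarrow> real) \<Rightarrow> nat \<Rightarrow> real" where
  "gradx k n r A U x j = deriv (\<lambda>t. LG k n r A U (x(j := x j + t))) 0"

definition feasible_LRPOTA :: "nat \<Rightarrow> nat \<Rightarrow> (nat \<Rightarrow> nat) \<Rightarrow> nat
                    \<Rightarrow> (nat \<Rightarrow> nat \<Rightarrow> nat \<Rightarrow> real) \<Rightarrow> bool" where
  "feasible_LRPOTA k s n r U =
     ((\<forall>i<s. is_stiefel n r U i) \<and> (\<forall>i. s \<le> i \<and> i < k \<longrightarrow> is_unitcol n r U i))"

definition KKT_point :: "nat \<Rightarrow> nat \<Rightarrow> (nat \<Rightarrow> nat) \<Rightarrow> nat \<Rightarrow> ((nat \<Rightarrow> nat) \<Rightarrow> real)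
                    \<Rightarrow> (nat \<Rightarrow> nat \<Rightarrow> nat \<Rightarrow> real) \<Rightarrow> (nat \<Rightarrow> real) \<Rightarrow> bool" where
  "KKT_point k s n r A U lam =
     (feasible_LRPOTA k s n r U \<and>
      (\<exists>P :: nat \<Rightarrow> nat \<Rightarrow> nat \<Rightarrow> real.
         (\<forall>i<s. \<forall>j<r. \<forall>l<r. P i j l = P i l j) \<and>
         (\<forall>i<s. \<forall>a<n i. \<forall>j<r. gradU k n r A U lam i a j = (\<Sum>l<r. U i a l * P i l j))) \<and>
      (\<exists>p :: nat \<Rightarrow> nat \<Rightarrow> real.
         \<forall>i. s \<le> i \<and> i < k \<longrightarrow>
           (\<forall>a<n i. \<forall>j<r. gradU k n r A U lam i a j = U i a j * p i j)) \<and>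
      (\<forall>j<r. gradx k n r A U lam j = 0))"

end

theory Submission
  imports Defs
begin

(* Along a curve (U(t), x(t)) through the point, the derivative of G is the pairing dG of the
   velocity (V, y) with the Euclidean gradient.

   Given KKT multipliers, the gradient of every mode is U^(i) Q_i with Q_i symmetric, and
   diagonal for the oblique modes. Differentiating the constraints along a curve in W makes
   (U^(i))^T V^(i) skew-symmetric, resp. zero on the diagonal, so each mode pairs to zero with
   its gradient, and so does x because the x-gradient vanishes.

   Conversely, at a critical point g is stationary along explicit curves in W: shifting x_j
   (possible since x_j is nonzero); replacing column j of U^(i) by the normalisation of
   U_j + t v, whose velocity is the part of v orthogonal to U_j; and rotating two columns of a
   Stiefel factor. For v orthogonal to all columns this puts every gradient column into the
   column span of U^(i); in an oblique mode v = U_l then pins the gradient column to a multiple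
   of U_j; and the rotations make (U^(i))^T times the gradient symmetric. Full column rank
   survives along the column curves because there v lies in the span of the other columns plus
   the orthogonal complement of all columns. *)

section \<open>Derivative of the objective along curves\<close>

definition residual :: "nat \<Rightarrow> nat \<Rightarrow> ((nat \<Rightarrow> nat) \<Rightarrow> real)
    \<Rightarrow> (nat \<Rightarrow> nat \<Rightarrow> nat \<Rightarrow> real) \<Rightarrow> (nat \<Rightarrow> real) \<Rightarrow> (nat \<Rightarrow> nat) \<Rightarrow> real" where
  "residual k r A U x \<iota> = A \<iota> - cpd k r U x \<iota>"

definition cpd_partial_U :: "nat \<Rightarrow> (nat \<Rightarrow> nat \<Rightarrow> nat \<Rightarrow> real) \<Rightarrow> (nat \<Rightarrow> real)
    \<Rightarrow> nat \<Rightarrow> nat \<Rightarrow> nat \<Rightarrow> (nat \<Rightarrow> nat) \<Rightarrow> real" where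
  "cpd_partial_U k U x i a j \<iota> =
     (if \<iota> i = a then x j * (\<Prod>m\<in>{..<k} - {i}. U m (\<iota> m) j) else 0)"

definition cpd_partial_x :: "nat \<Rightarrow> (nat \<Rightarrow> nat \<Rightarrow> nat \<Rightarrow> real) \<Rightarrow> nat \<Rightarrow> (nat \<Rightarrow> nat) \<Rightarrow> real" where
  "cpd_partial_x k U j \<iota> = (\<Prod>m<k. U m (\<iota> m) j)"

definition dG_dU :: "nat \<Rightarrow> (nat \<Rightarrow> nat) \<Rightarrow> nat \<Rightarrow> ((nat \<Rightarrow> nat) \<Rightarrow> real)
    \<Rightarrow> (nat \<Rightarrow> nat \<Rightarrow> nat \<Rightarrow> real) \<Rightarrow> (nat \<Rightarrow> real) \<Rightarrow> nat \<Rightarrow> nat \<Rightarrow> nat \<Rightarrow> real" where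
  "dG_dU k n r A U x i a j =
     -2 * (\<Sum>\<iota>\<in>tidx k n. residual k r A U x \<iota> * cpd_partial_U k U x i a j \<iota>)"

definition dG_dx :: "nat \<Rightarrow> (nat \<Rightarrow> nat) \<Rightarrow> nat \<Rightarrow> ((nat \<Rightarrow> nat) \<Rightarrow> real)
    \<Rightarrow> (nat \<Rightarrow> nat \<Rightarrow> nat \<Rightarrow> real) \<Rightarrow> (nat \<Rightarrow> real) \<Rightarrow> nat \<Rightarrow> real" where
  "dG_dx k n r A U x j = -2 * (\<Sum>\<iota>\<in>tidx k n. residual k r A U x \<iota> * cpd_partial_x k U j \<iota>)"

definition dG :: "nat \<Rightarrow> (nat \<Rightarrow> nat) \<Rightarrow> nat \<Rightarrow> ((nat \<Rightarrow> nat) \<Rightarrow> real)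
    \<Rightarrow> (nat \<Rightarrow> nat \<Rightarrow> nat \<Rightarrow> real) \<Rightarrow> (nat \<Rightarrow> real)
    \<Rightarrow> (nat \<Rightarrow> nat \<Rightarrow> nat \<Rightarrow> real) \<Rightarrow> (nat \<Rightarrow> real) \<Rightarrow> real" where
  "dG k n r A U x V y =
     (\<Sum>i<k. \<Sum>a<n i. \<Sum>j<r. V i a j * dG_dU k n r A U x i a j) + (\<Sum>j<r. y j * dG_dx k n r A U x j)"

lemma tidx_less: "\<iota> \<in> tidx k n \<Longrightarrow> i < k \<Longrightarrow> \<iota> i < n i"
  unfolding tidx_def by auto

lemma sum_cpd_partial_U:
  assumes "\<iota> \<in> tidx k n"
  shows "(\<Sum>i<k. \<Sum>a<n i. \<Sum>j<r. V i a j * cpd_partial_U k U x i a j \<iota>)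
       = (\<Sum>j<r. x j * (\<Sum>i<k. V i (\<iota> i) j * (\<Prod>m\<in>{..<k} - {i}. U m (\<iota> m) j)))"
proof -
  have "(\<Sum>a<n i. \<Sum>j<r. V i a j * cpd_partial_U k U x i a j \<iota>)
      = (\<Sum>j<r. x j * (V i (\<iota> i) j * (\<Prod>m\<in>{..<k} - {i}. U m (\<iota> m) j)))" if "i < k" for i
    using tidx_less[OF assms that]
    by (subst sum.swap) (simp add: cpd_partial_U_def if_distrib algebra_simps cong: if_cong)
  then show ?thesis
    by (simp add: sum_distrib_left sum.swap[of _ "{..<k}"])
qed

lemma cpd_has_derivative_along_curve:
  assumes dU: "\<And>i a j. i < k \<Longrightarrow> a < n i \<Longrightarrow> j < r \<Longrightarrow>
      ((\<lambda>t. Uc t i a j) has_real_derivative V i a j) (at 0)"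
    and dx: "\<And>j. j < r \<Longrightarrow> ((\<lambda>t. xc t j) has_real_derivative y j) (at 0)"
    and U0: "\<And>i a j. i < k \<Longrightarrow> a < n i \<Longrightarrow> j < r \<Longrightarrow> Uc 0 i a j = U i a j"
    and x0: "\<And>j. j < r \<Longrightarrow> xc 0 j = x j"
    and \<iota>: "\<iota> \<in> tidx k n"
  shows "((\<lambda>t. cpd k r (Uc t) (xc t) \<iota>) has_real_derivative
      (\<Sum>i<k. \<Sum>a<n i. \<Sum>j<r. V i a j * cpd_partial_U k U x i a j \<iota>)
      + (\<Sum>j<r. y j * cpd_partial_x k U j \<iota>)) (at 0)"
proof -
  have prod0: "(\<Prod>m\<in>M. Uc 0 m (\<iota> m) j) = (\<Prod>m\<in>M. U m (\<iota> m) j)"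
    if "M \<subseteq> {..<k}" "j < r" for M j
    using that tidx_less[OF \<iota>] U0 by (intro prod.cong) auto
  have "((\<lambda>t. \<Sum>j<r. xc t j * (\<Prod>m<k. Uc t m (\<iota> m) j)) has_real_derivative
      (\<Sum>j<r. xc 0 j * (\<Sum>i<k. V i (\<iota> i) j * (\<Prod>m\<in>{..<k} - {i}. Uc 0 m (\<iota> m) j))
               + y j * (\<Prod>m<k. Uc 0 m (\<iota> m) j))) (at 0)"
    using tidx_less[OF \<iota>]
    by (intro DERIV_sum DERIV_mult' dx has_field_derivative_prod dU) auto
  then show ?thesis
    using x0 prod0 unfolding cpd_def sum_cpd_partial_U[OF \<iota>] cpd_partial_x_def
    by (simp add: sum.distrib algebra_simps)
qed

lemma LG_has_derivative_along_curve:
  assumes dU: "\<And>i a j. i < k \<Longrightarrow> a < n i \<Longrightarrow> j < r \<Longrightarrow>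
      ((\<lambda>t. Uc t i a j) has_real_derivative V i a j) (at 0)"
    and dx: "\<And>j. j < r \<Longrightarrow> ((\<lambda>t. xc t j) has_real_derivative y j) (at 0)"
    and U0: "\<And>i a j. i < k \<Longrightarrow> a < n i \<Longrightarrow> j < r \<Longrightarrow> Uc 0 i a j = U i a j"
    and x0: "\<And>j. j < r \<Longrightarrow> xc 0 j = x j"
  shows "((\<lambda>t. LG k n r A (Uc t) (xc t)) has_real_derivative dG k n r A U x V y) (at 0)"
proof -
  let ?R = "residual k r A U x"
  have cpd0: "cpd k r (Uc 0) (xc 0) \<iota> = cpd k r U x \<iota>" if "\<iota> \<in> tidx k n" for \<iota>
    unfolding cpd_def using U0 x0 tidx_less[OF that]
    by (intro sum.cong refl arg_cong2[where f = "(*)"] prod.cong) auto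
  have "((\<lambda>t. LG k n r A (Uc t) (xc t)) has_real_derivative
      (\<Sum>\<iota>\<in>tidx k n. -2 * ?R \<iota> *
        ((\<Sum>i<k. \<Sum>a<n i. \<Sum>j<r. V i a j * cpd_partial_U k U x i a j \<iota>)
          + (\<Sum>j<r. y j * cpd_partial_x k U j \<iota>)))) (at 0)"
    unfolding LG_def
    by (rule derivative_eq_intros cpd_has_derivative_along_curve[OF dU dx U0 x0] refl | assumption)+
       (intro sum.cong refl, simp add: residual_def cpd0 algebra_simps)
  moreover have "(\<Sum>\<iota>\<in>tidx k n. -2 * ?R \<iota> *
        ((\<Sum>i<k. \<Sum>a<n i. \<Sum>j<r. V i a j * cpd_partial_U k U x i a j \<iota>)
          + (\<Sum>j<r. y j * cpd_partial_x k U j \<iota>))) = dG k n r A U x V y"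
    unfolding dG_def dG_dU_def dG_dx_def
    by (simp only: sum.distrib distrib_left sum_distrib_left sum.swap[of _ "tidx k n"])
       (simp add: algebra_simps)
  ultimately show ?thesis by simp
qed

lemma dG_single_mode:
  assumes "i < k"
  shows "dG k n r A U x (\<lambda>i' a c. if i' = i then W a c else 0) (\<lambda>_. 0)
       = (\<Sum>a<n i. \<Sum>c<r. W a c * dG_dU k n r A U x i a c)"
proof -
  have "(\<Sum>a<n i'. \<Sum>c<r. (if i' = i then W a c else 0) * dG_dU k n r A U x i' a c)
      = (if i' = i then \<Sum>a<n i. \<Sum>c<r. W a c * dG_dU k n r A U x i a c else 0)" for i'
    by (cases "i' = i") simp_all
  then show ?thesis
    using assms by (simp add: dG_def)
qed

lemma gradU_eq_dG_dU:
  assumes "i < k" "a < n i" "j < r"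
  shows "gradU k n r A U x i a j = dG_dU k n r A U x i a j"
proof -
  let ?W = "\<lambda>a' j'. if j' = j then if a' = a then 1 else 0 else (0::real)"
  let ?V = "\<lambda>i' a' j'. if i' = i then ?W a' j' else 0"
  have "((\<lambda>t. LG k n r A (U(i := (U i)(a := (U i a)(j := U i a j + t)))) x)
      has_real_derivative dG k n r A U x ?V (\<lambda>_. 0)) (at 0)"
  proof (rule LG_has_derivative_along_curve)
    fix i' a' j'
    show "((\<lambda>t. (U(i := (U i)(a := (U i a)(j := U i a j + t)))) i' a' j')
        has_real_derivative ?V i' a' j') (at 0)"
      by (cases "i' = i"; cases "a' = a"; cases "j' = j") (auto intro!: derivative_eq_intros)
  qed auto
  moreover have "dG k n r A U x ?V (\<lambda>_. 0) = dG_dU k n r A U x i a j"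
    using assms by (simp add: dG_single_mode if_distrib[of "\<lambda>v. v * _"] cong: if_cong)
  ultimately show ?thesis
    unfolding gradU_def by (simp add: DERIV_imp_deriv)
qed

lemma gradx_eq_dG_dx:
  assumes "j < r"
  shows "gradx k n r A U x j = dG_dx k n r A U x j"
proof -
  let ?y = "\<lambda>j'. if j' = j then 1 else (0::real)"
  have "((\<lambda>t. LG k n r A U (x(j := x j + t)))
      has_real_derivative dG k n r A U x (\<lambda>_ _ _. 0) ?y) (at 0)"
    by (rule LG_has_derivative_along_curve) (auto intro!: derivative_eq_intros)
  moreover have "dG k n r A U x (\<lambda>_ _ _. 0) ?y = dG_dx k n r A U x j"
    using assms by (simp add: dG_def if_distrib[of "\<lambda>v. v * _"] cong: if_cong)
  ultimately show ?thesis
    unfolding gradx_def by (simp add: DERIV_imp_deriv)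
qed

section \<open>Multipliers give critical points\<close>

lemma sum_symmetric_times_antisymmetric:
  fixes P S :: "nat \<Rightarrow> nat \<Rightarrow> real"
  assumes sym: "\<And>j l. j < r \<Longrightarrow> l < r \<Longrightarrow> P l j = P j l"
    and antisym: "\<And>j l. j < r \<Longrightarrow> l < r \<Longrightarrow> P l j \<noteq> 0 \<Longrightarrow> S j l + S l j = 0"
  shows "(\<Sum>j<r. \<Sum>l<r. P l j * S j l) = 0"
proof -
  have "(\<Sum>j<r. \<Sum>l<r. P l j * S j l) = (\<Sum>j<r. \<Sum>l<r. P l j * S l j)"
    using sym by (subst sum.swap) (intro sum.cong refl; simp)
  moreover have "(\<Sum>j<r. \<Sum>l<r. P l j * (S j l + S l j)) = 0"
    using antisym by (intro sum.neutral ballI) (metis lessThan_iff mult_eq_0_iff)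
  ultimately show ?thesis
    by (simp add: distrib_left sum.distrib)
qed

lemma tangent_pairing_eq_0:
  fixes V U G P :: "nat \<Rightarrow> nat \<Rightarrow> real"
  assumes G: "\<And>a j. a < N \<Longrightarrow> j < r \<Longrightarrow> G a j = (\<Sum>l<r. U a l * P l j)"
    and sym: "\<And>j l. j < r \<Longrightarrow> l < r \<Longrightarrow> P l j = P j l"
    and tangent: "\<And>j l. j < r \<Longrightarrow> l < r \<Longrightarrow> P l j \<noteq> 0 \<Longrightarrow>
                    (\<Sum>a<N. V a j * U a l + U a j * V a l) = 0"
  shows "(\<Sum>a<N. \<Sum>j<r. V a j * G a j) = 0"
proof -
  have "(\<Sum>a<N. \<Sum>j<r. V a j * G a j) = (\<Sum>a<N. \<Sum>j<r. \<Sum>l<r. P l j * (V a j * U a l))"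
    using G by (simp add: sum_distrib_left algebra_simps)
  also have "\<dots> = (\<Sum>j<r. \<Sum>l<r. P l j * (\<Sum>a<N. V a j * U a l))"
    by (simp only: sum.swap[of _ "{..<N}"] sum_distrib_left)
  also have "\<dots> = 0"
  proof (rule sum_symmetric_times_antisymmetric[OF sym])
    fix j l assume "j < r" "l < r" "P l j \<noteq> 0"
    from tangent[OF this] show "(\<Sum>a<N. V a j * U a l) + (\<Sum>a<N. V a l * U a j) = 0"
      by (simp add: sum.distrib mult.commute)
  qed
  finally show ?thesis .
qed

lemma tangent_of_col_inner_const:
  assumes "\<epsilon> > 0"
    and const: "\<And>t. \<bar>t\<bar> < \<epsilon> \<Longrightarrow> col_inner n (Uc t) i j l = c"
    and dj: "\<And>a. a < n i \<Longrightarrow> ((\<lambda>t. Uc t i a j) has_real_derivative V a j) (at 0)"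
    and dl: "\<And>a. a < n i \<Longrightarrow> ((\<lambda>t. Uc t i a l) has_real_derivative V a l) (at 0)"
    and U0j: "\<And>a. a < n i \<Longrightarrow> Uc 0 i a j = U i a j"
    and U0l: "\<And>a. a < n i \<Longrightarrow> Uc 0 i a l = U i a l"
  shows "(\<Sum>a<n i. V a j * U i a l + U i a j * V a l) = 0"
proof -
  have "((\<lambda>t. col_inner n (Uc t) i j l) has_real_derivative
      (\<Sum>a<n i. V a j * Uc 0 i a l + V a l * Uc 0 i a j)) (at 0)"
    unfolding col_inner_def by (intro DERIV_sum DERIV_mult dj dl) auto
  moreover have "((\<lambda>t. col_inner n (Uc t) i j l) has_real_derivative 0) (at 0)"
  proof (rule has_field_derivative_transform_within_open[OF DERIV_const[of c]])
    show "open (ball (0::real) \<epsilon>)" "0 \<in> ball (0::real) \<epsilon>"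
      using \<open>\<epsilon> > 0\<close> by simp_all
  qed (simp add: const dist_real_def)
  ultimately show ?thesis
    using U0j U0l DERIV_unique by (fastforce simp: mult.commute)
qed

lemma KKT_point_multipliers:
  assumes "KKT_point k s n r A U x"
  obtains Q where "\<And>i j l. i < k \<Longrightarrow> j < r \<Longrightarrow> l < r \<Longrightarrow> Q i l j = Q i j l"
    and "\<And>i a j. i < k \<Longrightarrow> a < n i \<Longrightarrow> j < r \<Longrightarrow>
           dG_dU k n r A U x i a j = (\<Sum>l<r. U i a l * Q i l j)"
    and "\<And>i j l. s \<le> i \<Longrightarrow> Q i l j \<noteq> 0 \<Longrightarrow> l = j"
proof -
  from assms obtain P p where
    Psym: "\<forall>i<s. \<forall>j<r. \<forall>l<r. P i j l = P i l j" and
    P: "\<forall>i<s. \<forall>a<n i. \<forall>j<r. gradU k n r A U x i a j = (\<Sum>l<r. U i a l * P i l j)" and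
    p: "\<forall>i. s \<le> i \<and> i < k \<longrightarrow> (\<forall>a<n i. \<forall>j<r. gradU k n r A U x i a j = U i a j * p i j)"
    unfolding KKT_point_def by blast
  define Q where "Q i l j = (if i < s then P i l j else if l = j then p i j else 0)" for i l j
  show thesis
  proof (rule that[of Q])
    show "Q i l j = Q i j l" if "i < k" "j < r" "l < r" for i j l
      using Psym that by (simp add: Q_def)
    show "l = j" if "s \<le> i" "Q i l j \<noteq> 0" for i j l
      using that by (simp add: Q_def split: if_splits)
    show "dG_dU k n r A U x i a j = (\<Sum>l<r. U i a l * Q i l j)"
      if "i < k" "a < n i" "j < r" for i a j
    proof (cases "i < s")
      case True
      then show ?thesis
        using P that by (simp add: Q_def flip: gradU_eq_dG_dU)
    next
      case False
      then show ?thesis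
        using p that
        by (simp add: Q_def if_distrib[of "\<lambda>v. _ * v"] cong: if_cong flip: gradU_eq_dG_dU)
    qed
  qed
qed

lemma KKT_point_imp_critical_point_W:
  assumes W: "in_W k s n r U x" and KKT: "KKT_point k s n r A U x"
  shows "critical_point_W k s n r A U x"
  unfolding critical_point_W_def
proof (intro conjI allI impI W)
  fix \<epsilon> :: real and Uc xc
  assume "\<epsilon> > 0" and W_curve: "\<forall>t. \<bar>t\<bar> < \<epsilon> \<longrightarrow> in_W k s n r (Uc t) (xc t)"
    and U0: "\<forall>i<k. \<forall>a<n i. \<forall>j<r. Uc 0 i a j = U i a j" and x0: "\<forall>j<r. xc 0 j = x j"
    and dU: "\<forall>i<k. \<forall>a<n i. \<forall>j<r. (\<lambda>t. Uc t i a j) differentiable (at 0)"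
    and dx: "\<forall>j<r. (\<lambda>t. xc t j) differentiable (at 0)"
  define V where "V i a j = deriv (\<lambda>t. Uc t i a j) 0" for i a j
  define y where "y j = deriv (\<lambda>t. xc t j) 0" for j
  have V: "((\<lambda>t. Uc t i a j) has_real_derivative V i a j) (at 0)"
    if "i < k" "a < n i" "j < r" for i a j
    unfolding V_def using dU that DERIV_deriv_iff_real_differentiable by blast
  have y: "((\<lambda>t. xc t j) has_real_derivative y j) (at 0)" if "j < r" for j
    unfolding y_def using dx that DERIV_deriv_iff_real_differentiable by blast
  obtain Q where Qsym: "\<And>i j l. i < k \<Longrightarrow> j < r \<Longrightarrow> l < r \<Longrightarrow> Q i l j = Q i j l"
    and Q: "\<And>i a j. i < k \<Longrightarrow> a < n i \<Longrightarrow> j < r \<Longrightarrow>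
              dG_dU k n r A U x i a j = (\<Sum>l<r. U i a l * Q i l j)"
    and Qdiag: "\<And>i j l. s \<le> i \<Longrightarrow> Q i l j \<noteq> 0 \<Longrightarrow> l = j"
    using KKT_point_multipliers[OF KKT] by blast
  have mode: "(\<Sum>a<n i. \<Sum>j<r. V i a j * dG_dU k n r A U x i a j) = 0" if i: "i < k" for i
  proof (rule tangent_pairing_eq_0[OF Q[OF i] Qsym[OF i]])
    fix j l assume j: "j < r" and l: "l < r" and "Q i l j \<noteq> 0"
    then have "l = j" if "s \<le> i" using Qdiag that by blast
    then have "col_inner n (Uc t) i j l = (if j = l then 1 else 0)" if "\<bar>t\<bar> < \<epsilon>" for t
      using W_curve that i j l unfolding in_W_def is_stiefel_def is_unitcol_def
      by (cases "i < s") auto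
    then show "(\<Sum>a<n i. V i a j * U i a l + U i a j * V i a l) = 0"
      using \<open>\<epsilon> > 0\<close> V U0 i j l
      by (intro tangent_of_col_inner_const[where n = n and Uc = Uc and i = i and V = "V i"]) auto
  qed
  have "((\<lambda>t. LG k n r A (Uc t) (xc t)) has_real_derivative dG k n r A U x V y) (at 0)"
    using V y U0 x0 by (intro LG_has_derivative_along_curve) auto
  moreover have "dG k n r A U x V y = 0"
    using mode KKT gradx_eq_dG_dx unfolding dG_def KKT_point_def by simp
  ultimately show "((\<lambda>t. lg k n r A (Uc t) (xc t)) has_real_derivative 0) (at 0)"
    unfolding lg_def using DERIV_cdivide by fastforce
qed

section \<open>Critical points give multipliers\<close>

lemma critical_point_W_imp_dG_eq_0:
  assumes crit: "critical_point_W k s n r A U x" and "\<epsilon> > 0"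
    and W_curve: "\<And>t. \<bar>t\<bar> < \<epsilon> \<Longrightarrow> in_W k s n r (Uc t) (xc t)"
    and dU: "\<And>i a j. i < k \<Longrightarrow> a < n i \<Longrightarrow> j < r \<Longrightarrow>
      ((\<lambda>t. Uc t i a j) has_real_derivative V i a j) (at 0)"
    and dx: "\<And>j. j < r \<Longrightarrow> ((\<lambda>t. xc t j) has_real_derivative y j) (at 0)"
    and U0: "\<And>i a j. i < k \<Longrightarrow> a < n i \<Longrightarrow> j < r \<Longrightarrow> Uc 0 i a j = U i a j"
    and x0: "\<And>j. j < r \<Longrightarrow> xc 0 j = x j"
  shows "dG k n r A U x V y = 0"
proof -
  have "((\<lambda>t. lg k n r A (Uc t) (xc t)) has_real_derivative 0) (at 0)"
    using crit \<open>\<epsilon> > 0\<close> W_curve U0 x0 dU dx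
    unfolding critical_point_W_def real_differentiable_def by blast
  moreover have "((\<lambda>t. lg k n r A (Uc t) (xc t)) has_real_derivative dG k n r A U x V y / 2) (at 0)"
    unfolding lg_def using dU dx U0 x0 by (intro DERIV_cdivide LG_has_derivative_along_curve)
  ultimately show ?thesis
    using DERIV_unique by fastforce
qed

lemma in_W_update_mode:
  assumes W: "in_W k s n r U x"
    and stiefel: "i < s \<Longrightarrow> is_stiefel n r U' i"
    and oblique: "s \<le> i \<Longrightarrow> i < k \<Longrightarrow> is_unitcol n r U' i \<and> full_col_rank n r U' i"
    and other: "\<And>i'. i' \<noteq> i \<Longrightarrow> U' i' = U i'"
  shows "in_W k s n r U' x"
proof -
  have "is_stiefel n r U' i' = is_stiefel n r U i'"
    and "is_unitcol n r U' i' = is_unitcol n r U i'"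
    and "full_col_rank n r U' i' = full_col_rank n r U i'" if "i' \<noteq> i" for i'
    using other[OF that]
    by (simp_all add: is_stiefel_def is_unitcol_def col_inner_def full_col_rank_def)
  then show ?thesis
    using W stiefel oblique unfolding in_W_def by metis
qed

lemma full_col_rank_perp_combination:
  assumes rank: "full_col_rank n r U i"
    and perp: "\<And>m. m < r \<Longrightarrow> (\<Sum>a<n i. w a * U i a m) = 0"
    and comb: "\<forall>a<n i. (\<Sum>m<r. c m * U i a m) + e * w a = 0"
  shows "\<forall>m<r. c m = 0"
proof -
  have "(\<Sum>a<n i. w a * ((\<Sum>m<r. c m * U i a m) + e * w a))
      = (\<Sum>m<r. c m * (\<Sum>a<n i. w a * U i a m)) + e * (\<Sum>a<n i. w a * w a)"
    by (simp add: sum.distrib sum_distrib_left algebra_simps sum.swap[of _ "{..<n i}"])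
  then have "e * (\<Sum>a<n i. w a * w a) = 0"
    using comb perp by simp
  then have "\<forall>a<n i. e * w a = 0"
    using sum_nonneg_eq_0_iff[of "{..<n i}" "\<lambda>a. w a * w a"] by auto
  then have "\<forall>a<n i. (\<Sum>m<r. c m * U i a m) = 0"
    using comb by (metis add.right_neutral)
  then show ?thesis
    using rank unfolding full_col_rank_def by blast
qed

definition normalized_shift :: "(nat \<Rightarrow> nat) \<Rightarrow> (nat \<Rightarrow> nat \<Rightarrow> nat \<Rightarrow> real) \<Rightarrow> nat \<Rightarrow> nat
    \<Rightarrow> (nat \<Rightarrow> real) \<Rightarrow> real \<Rightarrow> nat \<Rightarrow> nat \<Rightarrow> nat \<Rightarrow> real" where
  "normalized_shift n U i j v t = U(i := (\<lambda>a c. if c = j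
      then (U i a j + t * v a) / sqrt (\<Sum>b<n i. (U i b j + t * v b)\<^sup>2) else U i a c))"

lemma sum_sq_shifted_column:
  "(\<Sum>a<n i. (U i a j + t * v a)\<^sup>2)
     = col_inner n U i j j + 2 * t * (\<Sum>a<n i. U i a j * v a) + t\<^sup>2 * (\<Sum>a<n i. v a * v a)"
  unfolding col_inner_def
  by (simp add: power2_eq_square algebra_simps sum.distrib sum_distrib_left)

lemma normalized_shift_0:
  assumes "col_inner n U i j j = 1"
  shows "normalized_shift n U i j v 0 = U"
proof -
  have "(\<Sum>b<n i. (U i b j)\<^sup>2) = 1"
    using assms by (simp add: col_inner_def power2_eq_square)
  then show ?thesis
    by (auto simp: normalized_shift_def fun_eq_iff)
qed

lemma normalized_shift_has_derivative:
  assumes "col_inner n U i j j = 1"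
  shows "((\<lambda>t. normalized_shift n U i j v t i' a c) has_real_derivative
     (if i' = i then if c = j then v a - (\<Sum>b<n i. U i b j * v b) * U i a j else 0 else 0)) (at 0)"
proof (cases "i' = i \<and> c = j")
  case True
  define \<beta> where "\<beta> = (\<Sum>b<n i. U i b j * v b)"
  define \<gamma> where "\<gamma> = (\<Sum>b<n i. v b * v b)"
  have "((\<lambda>t. (U i a j + t * v a) / sqrt (1 + 2 * t * \<beta> + t\<^sup>2 * \<gamma>)) has_real_derivative
     v a - \<beta> * U i a j) (at 0)"
    by (rule derivative_eq_intros refl | simp)+
  then show ?thesis
    using True assms by (simp add: normalized_shift_def sum_sq_shifted_column \<beta>_def \<gamma>_def)
qed (cases "i' = i"; auto simp: normalized_shift_def)

lemma col_inner_normalized_shift_same: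
  assumes "(\<Sum>b<n i. (U i b j + t * v b)\<^sup>2) > 0"
  shows "col_inner n (normalized_shift n U i j v t) i j j = 1"
  using assms
  by (simp add: col_inner_def normalized_shift_def power_divide
      flip: power2_eq_square sum_divide_distrib)

lemma col_inner_normalized_shift:
  assumes "m \<noteq> j"
  shows "col_inner n (normalized_shift n U i j v t) i j m
           = (col_inner n U i j m + t * (\<Sum>a<n i. v a * U i a m))
             / sqrt (\<Sum>b<n i. (U i b j + t * v b)\<^sup>2)"
    and "col_inner n (normalized_shift n U i j v t) i m j
           = (col_inner n U i j m + t * (\<Sum>a<n i. v a * U i a m))
             / sqrt (\<Sum>b<n i. (U i b j + t * v b)\<^sup>2)"
  using assms
  by (simp_all add: col_inner_def normalized_shift_def sum_distrib_left sum.distrib algebra_simps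
      flip: sum_divide_distrib)

lemma col_inner_normalized_shift_other:
  assumes "m \<noteq> j" "m' \<noteq> j"
  shows "col_inner n (normalized_shift n U i j v t) i m m' = col_inner n U i m m'"
  using assms by (simp add: col_inner_def normalized_shift_def)

lemma is_unitcol_normalized_shift:
  assumes "is_unitcol n r U i" and "(\<Sum>b<n i. (U i b j + t * v b)\<^sup>2) > 0"
  shows "is_unitcol n r (normalized_shift n U i j v t) i"
  using assms col_inner_normalized_shift_same col_inner_normalized_shift_other
  unfolding is_unitcol_def by metis

lemma is_stiefel_normalized_shift:
  assumes st: "is_stiefel n r U i" and j: "j < r"
    and perp: "\<And>m. m < r \<Longrightarrow> (\<Sum>a<n i. v a * U i a m) = 0"
  shows "is_stiefel n r (normalized_shift n U i j v t) i"
proof -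
  have "(\<Sum>b<n i. (U i b j + t * v b)\<^sup>2) = 1 + t\<^sup>2 * (\<Sum>a<n i. v a * v a)"
    using st j perp[OF j] by (simp add: sum_sq_shifted_column is_stiefel_def mult.commute)
  moreover have "0 \<le> (\<Sum>a<n i. v a * v a)"
    by (simp add: sum_nonneg)
  ultimately have pos: "(\<Sum>b<n i. (U i b j + t * v b)\<^sup>2) > 0"
    by (metis add_pos_nonneg zero_less_one zero_le_power2 mult_nonneg_nonneg)
  show ?thesis
    unfolding is_stiefel_def
  proof (intro allI impI)
    fix m m' assume "m < r" "m' < r"
    then show "col_inner n (normalized_shift n U i j v t) i m m' = (if m = m' then 1 else 0)"
      using st perp col_inner_normalized_shift_same[where n = n and U = U and v = v, OF pos]
        col_inner_normalized_shift[of _ j] col_inner_normalized_shift_other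
      unfolding is_stiefel_def by (cases "m = j"; cases "m' = j") auto
  qed
qed

lemma full_col_rank_shift_combination:
  assumes rank: "full_col_rank n r U i"
    and v: "\<And>a. a < n i \<Longrightarrow> v a = (\<Sum>m<r. \<beta> m * U i a m) + w a"
    and perp: "\<And>m. m < r \<Longrightarrow> (\<Sum>a<n i. w a * U i a m) = 0"
    and comb: "\<forall>a<n i. (\<Sum>m<r. c m * U i a m) + e * v a = 0"
  shows "\<forall>m<r. c m + e * \<beta> m = 0"
proof -
  have "(\<Sum>m<r. c m * U i a m) + e * v a = (\<Sum>m<r. (c m + e * \<beta> m) * U i a m) + e * w a"
    if "a < n i" for a
    using v[OF that] by (simp add: sum.distrib sum_distrib_left algebra_simps)
  with comb have "\<forall>a<n i. (\<Sum>m<r. (c m + e * \<beta> m) * U i a m) + e * w a = 0"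
    by simp
  from full_col_rank_perp_combination[OF rank perp this] show ?thesis .
qed

lemma normalized_shift_norm_pos:
  assumes rank: "full_col_rank n r U i" and j: "j < r"
    and v: "\<And>a. a < n i \<Longrightarrow> v a = (\<Sum>m<r. \<beta> m * U i a m) + w a" and "\<beta> j = 0"
    and perp: "\<And>m. m < r \<Longrightarrow> (\<Sum>a<n i. w a * U i a m) = 0"
  shows "(\<Sum>b<n i. (U i b j + t * v b)\<^sup>2) > 0"
proof (rule ccontr)
  let ?N = "\<Sum>b<n i. (U i b j + t * v b)\<^sup>2"
  assume "\<not> ?N > 0"
  then have "?N = 0"
    using sum_nonneg[of "{..<n i}" "\<lambda>b. (U i b j + t * v b)\<^sup>2"] by simp
  then have "\<forall>a<n i. (\<Sum>m<r. (if m = j then 1 else 0) * U i a m) + t * v a = 0"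
    using j sum_nonneg_eq_0_iff[of "{..<n i}" "\<lambda>b. (U i b j + t * v b)\<^sup>2"]
    by (simp add: if_distrib[of "\<lambda>u. u * _"] cong: if_cong)
  from full_col_rank_shift_combination[OF rank v perp this] j \<open>\<beta> j = 0\<close>
  show False
    by auto
qed

lemma full_col_rank_normalized_shift:
  assumes rank: "full_col_rank n r U i" and j: "j < r"
    and v: "\<And>a. a < n i \<Longrightarrow> v a = (\<Sum>m<r. \<beta> m * U i a m) + w a" and "\<beta> j = 0"
    and perp: "\<And>m. m < r \<Longrightarrow> (\<Sum>a<n i. w a * U i a m) = 0"
  shows "full_col_rank n r (normalized_shift n U i j v t) i"
  unfolding full_col_rank_def
proof (intro allI impI)
  fix c :: "nat \<Rightarrow> real" and m
  assume zero: "\<forall>a<n i. (\<Sum>m<r. c m * normalized_shift n U i j v t i a m) = 0" and "m < r"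
  define \<sigma> where "\<sigma> = sqrt (\<Sum>b<n i. (U i b j + t * v b)\<^sup>2)"
  have "\<sigma> > 0"
    using normalized_shift_norm_pos[OF rank j v \<open>\<beta> j = 0\<close> perp] by (simp add: \<sigma>_def)
  define c' where "c' m = c m + (if m = j then c j * (1 / \<sigma> - 1) else 0)" for m
  have "(\<Sum>m<r. c m * normalized_shift n U i j v t i a m)
      = (\<Sum>m<r. c' m * U i a m) + c j * t / \<sigma> * v a" for a
  proof -
    have "(\<Sum>m<r. c m * normalized_shift n U i j v t i a m)
        = (\<Sum>m<r. c m * U i a m + (if m = j then c j * ((U i a j + t * v a) / \<sigma> - U i a j) else 0))"
      by (intro sum.cong refl) (simp add: normalized_shift_def \<sigma>_def algebra_simps)
    moreover have "(\<Sum>m<r. c' m * U i a m)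
        = (\<Sum>m<r. c m * U i a m + (if m = j then c j * (1 / \<sigma> - 1) * U i a j else 0))"
      by (intro sum.cong refl) (simp add: c'_def algebra_simps)
    ultimately show ?thesis
      using j \<open>\<sigma> > 0\<close> by (simp add: sum.distrib field_simps)
  qed
  with zero have "\<forall>a<n i. (\<Sum>m<r. c' m * U i a m) + c j * t / \<sigma> * v a = 0"
    by simp
  from full_col_rank_shift_combination[OF rank v perp this]
  have coeffs: "\<forall>m<r. c' m + c j * t / \<sigma> * \<beta> m = 0" .
  then have "c j / \<sigma> = 0"
    using j \<open>\<beta> j = 0\<close> \<open>\<sigma> > 0\<close> by (auto simp: c'_def field_simps)
  then show "c m = 0"
    using coeffs \<open>m < r\<close> \<open>\<sigma> > 0\<close> by (cases "m = j") (auto simp: c'_def)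
qed

lemma in_W_col_inner_same:
  assumes "in_W k s n r U x" "i < k" "j < r"
  shows "col_inner n U i j j = 1"
  using assms unfolding in_W_def is_stiefel_def is_unitcol_def by (cases "i < s") auto

lemma critical_normalized_shift:
  assumes crit: "critical_point_W k s n r A U x" and W: "in_W k s n r U x"
    and i: "i < k" and j: "j < r"
    and W_shift: "\<And>t. in_W k s n r (normalized_shift n U i j v t) x"
  shows "(\<Sum>a<n i. (v a - (\<Sum>b<n i. U i b j * v b) * U i a j) * dG_dU k n r A U x i a j) = 0"
proof -
  have unit: "col_inner n U i j j = 1"
    using in_W_col_inner_same[OF W i j] .
  let ?W = "\<lambda>a c. if c = j then v a - (\<Sum>b<n i. U i b j * v b) * U i a j else 0"
  have "dG k n r A U x (\<lambda>i' a c. if i' = i then ?W a c else 0) (\<lambda>_. 0) = 0"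
    by (rule critical_point_W_imp_dG_eq_0[OF crit, of 1 "normalized_shift n U i j v" "\<lambda>_. x"])
       (simp_all add: W_shift normalized_shift_0[OF unit] normalized_shift_has_derivative[OF unit])
  then show ?thesis
    using j by (simp add: dG_single_mode[OF i] if_distrib[of "\<lambda>u. u * _"] cong: if_cong)
qed

lemma critical_orthogonal_direction:
  assumes crit: "critical_point_W k s n r A U x" and W: "in_W k s n r U x"
    and i: "i < k" and j: "j < r"
    and perp: "\<And>m. m < r \<Longrightarrow> (\<Sum>a<n i. v a * U i a m) = 0"
  shows "(\<Sum>a<n i. v a * dG_dU k n r A U x i a j) = 0"
proof -
  have v: "v a = (\<Sum>m<r. 0 * U i a m) + v a" for a
    by simp
  have "in_W k s n r (normalized_shift n U i j v t) x" for t
  proof (rule in_W_update_mode[OF W])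
    show "is_stiefel n r (normalized_shift n U i j v t) i" if "i < s"
      using W that j perp by (intro is_stiefel_normalized_shift) (auto simp: in_W_def)
    assume "s \<le> i" "i < k"
    then have "is_unitcol n r U i" and rank: "full_col_rank n r U i"
      using W by (auto simp: in_W_def)
    then show "is_unitcol n r (normalized_shift n U i j v t) i
        \<and> full_col_rank n r (normalized_shift n U i j v t) i"
      using normalized_shift_norm_pos[OF rank j v _ perp]
        full_col_rank_normalized_shift[OF rank j v _ perp]
      by (simp add: is_unitcol_normalized_shift)
  qed (simp add: normalized_shift_def)
  then have "(\<Sum>a<n i. (v a - (\<Sum>b<n i. U i b j * v b) * U i a j) * dG_dU k n r A U x i a j) = 0"
    by (rule critical_normalized_shift[OF crit W i j])
  moreover have "(\<Sum>b<n i. U i b j * v b) = 0"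
    using perp[OF j] by (simp add: mult.commute)
  ultimately show ?thesis
    by simp
qed

lemma critical_oblique_column_mix:
  assumes crit: "critical_point_W k s n r A U x" and W: "in_W k s n r U x"
    and i: "s \<le> i" "i < k" and j: "j < r" and l: "l < r" "l \<noteq> j"
  shows "(\<Sum>a<n i. (U i a l - col_inner n U i j l * U i a j) * dG_dU k n r A U x i a j) = 0"
proof -
  have "is_unitcol n r U i" and rank: "full_col_rank n r U i"
    using W i by (auto simp: in_W_def)
  have v: "U i a l = (\<Sum>m<r. (if m = l then 1 else 0) * U i a m) + 0" for a
    using l by (simp add: if_distrib[of "\<lambda>u. u * _"] cong: if_cong)
  have "in_W k s n r (normalized_shift n U i j (\<lambda>a. U i a l) t) x" for t
  proof (rule in_W_update_mode[OF W])
    show "is_unitcol n r (normalized_shift n U i j (\<lambda>a. U i a l) t) i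
        \<and> full_col_rank n r (normalized_shift n U i j (\<lambda>a. U i a l) t) i"
      using normalized_shift_norm_pos[OF rank j v] full_col_rank_normalized_shift[OF rank j v]
        \<open>is_unitcol n r U i\<close> l
      by (simp add: is_unitcol_normalized_shift)
  qed (use i in \<open>simp_all add: normalized_shift_def\<close>)
  from critical_normalized_shift[OF crit W \<open>i < k\<close> j this]
  show ?thesis
    by (simp add: col_inner_def)
qed

definition givens_rotation :: "(nat \<Rightarrow> nat \<Rightarrow> nat \<Rightarrow> real) \<Rightarrow> nat \<Rightarrow> nat \<Rightarrow> nat \<Rightarrow> real
    \<Rightarrow> nat \<Rightarrow> nat \<Rightarrow> nat \<Rightarrow> real" where
  "givens_rotation U i j l t = U(i := (\<lambda>a c.
      if c = j then cos t * U i a j + sin t * U i a l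
      else if c = l then cos t * U i a l - sin t * U i a j else U i a c))"

lemma is_stiefel_givens_rotation:
  assumes st: "is_stiefel n r U i" and j: "j < r" and l: "l < r" "l \<noteq> j"
  shows "is_stiefel n r (givens_rotation U i j l t) i"
  unfolding is_stiefel_def
proof (intro allI impI)
  fix m m' assume m: "m < r" and m': "m' < r"
  define \<alpha> where "\<alpha> c = (if c = j then cos t else if c = l then - sin t else 0)" for c
  define \<beta> where "\<beta> c = (if c = j then sin t else if c = l then cos t else 0)" for c
  define \<gamma> where "\<gamma> c = (if c = j \<or> c = l then 0 else (1::real))" for c
  have col: "givens_rotation U i j l t i a c = \<alpha> c * U i a j + \<beta> c * U i a l + \<gamma> c * U i a c"
    for a c
    using l by (simp add: givens_rotation_def \<alpha>_def \<beta>_def \<gamma>_def)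
  have orth: "col_inner n U i p q = (if p = q then 1 else 0)" if "p < r" "q < r" for p q
    using st that unfolding is_stiefel_def by blast
  have "col_inner n (givens_rotation U i j l t) i m m' =
     \<alpha> m * \<alpha> m' * col_inner n U i j j + \<alpha> m * \<beta> m' * col_inner n U i j l
       + \<alpha> m * \<gamma> m' * col_inner n U i j m' +
     \<beta> m * \<alpha> m' * col_inner n U i l j + \<beta> m * \<beta> m' * col_inner n U i l l
       + \<beta> m * \<gamma> m' * col_inner n U i l m' +
     \<gamma> m * \<alpha> m' * col_inner n U i m j + \<gamma> m * \<beta> m' * col_inner n U i m l
       + \<gamma> m * \<gamma> m' * col_inner n U i m m'"
    unfolding col_inner_def col by (simp add: sum.distrib sum_distrib_left algebra_simps)
  also have "\<dots> = (if m = m' then 1 else 0)"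
    using j l m m'
    unfolding orth[OF j j] orth[OF j l(1)] orth[OF j m'] orth[OF l(1) j] orth[OF l(1) l(1)]
      orth[OF l(1) m'] orth[OF m j] orth[OF m l(1)] orth[OF m m'] \<alpha>_def \<beta>_def \<gamma>_def
    by (auto simp: algebra_simps)
  finally show "col_inner n (givens_rotation U i j l t) i m m' = (if m = m' then 1 else 0)" .
qed

lemma givens_rotation_has_derivative:
  assumes "l \<noteq> j"
  shows "((\<lambda>t. givens_rotation U i j l t i' a c) has_real_derivative
    (if i' = i then (if c = j then U i a l else 0) - (if c = l then U i a j else 0) else 0)) (at 0)"
  using assms
  by (cases "i' = i"; cases "c = j"; cases "c = l")
     (auto simp: givens_rotation_def intro!: derivative_eq_intros)

lemma critical_givens_rotation:
  assumes crit: "critical_point_W k s n r A U x" and W: "in_W k s n r U x"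
    and i: "i < s" "s \<le> k" and j: "j < r" and l: "l < r" "l \<noteq> j"
  shows "(\<Sum>a<n i. U i a l * dG_dU k n r A U x i a j)
       = (\<Sum>a<n i. U i a j * dG_dU k n r A U x i a l)"
proof -
  have "in_W k s n r (givens_rotation U i j l t) x" for t
  proof (rule in_W_update_mode[OF W])
    show "is_stiefel n r (givens_rotation U i j l t) i"
      using W i j l by (intro is_stiefel_givens_rotation) (auto simp: in_W_def)
  qed (use i in \<open>auto simp: givens_rotation_def\<close>)
  moreover have "givens_rotation U i j l 0 = U"
    by (auto simp: givens_rotation_def fun_eq_iff)
  ultimately have "dG k n r A U x (\<lambda>i' a c. if i' = i then
      (if c = j then U i a l else 0) - (if c = l then U i a j else 0) else 0) (\<lambda>_. 0) = 0"
    using l givens_rotation_has_derivative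
    by (intro critical_point_W_imp_dG_eq_0[OF crit, of 1 "givens_rotation U i j l" "\<lambda>_. x"])
      simp_all
  then show ?thesis
    using i j l
    by (simp add: dG_single_mode left_diff_distrib if_distrib[of "\<lambda>u. u * _"] sum_subtractf
        cong: if_cong)
qed

lemma critical_gradient_in_column_span:
  assumes crit: "critical_point_W k s n r A U x" and W: "in_W k s n r U x"
    and i: "i < k" and j: "j < r"
    and perp: "\<And>m. m < r \<Longrightarrow>
      (\<Sum>a<n i. (dG_dU k n r A U x i a j - (\<Sum>l<r. U i a l * c l)) * U i a m) = 0"
    and a: "a < n i"
  shows "dG_dU k n r A U x i a j = (\<Sum>l<r. U i a l * c l)"
proof -
  define w where "w b = dG_dU k n r A U x i b j - (\<Sum>l<r. U i b l * c l)" for b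
  have "(\<Sum>b<n i. w b * dG_dU k n r A U x i b j) = 0"
    by (rule critical_orthogonal_direction[OF crit W i j]) (simp add: w_def perp)
  moreover have "(\<Sum>b<n i. w b * (\<Sum>l<r. U i b l * c l)) = (\<Sum>l<r. c l * (\<Sum>b<n i. w b * U i b l))"
    by (simp add: sum_distrib_left algebra_simps sum.swap[of _ "{..<n i}"])
  ultimately have "(\<Sum>b<n i. w b * w b) = 0"
    using perp by (simp add: w_def right_diff_distrib sum_subtractf)
  then have "w a = 0"
    using sum_nonneg_eq_0_iff[of "{..<n i}" "\<lambda>b. w b * w b"] a by simp
  then show ?thesis
    by (simp add: w_def)
qed

lemma critical_point_W_imp_gradx_eq_0:
  assumes crit: "critical_point_W k s n r A U x" and W: "in_W k s n r U x" and j: "j < r"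
  shows "gradx k n r A U x j = 0"
proof -
  have "x j \<noteq> 0"
    using W j by (simp add: in_W_def)
  then have "in_W k s n r U (x(j := x j + t))" if "\<bar>t\<bar> < \<bar>x j\<bar>" for t
    using W that by (auto simp: in_W_def)
  then have "dG k n r A U x (\<lambda>_ _ _. 0) (\<lambda>j'. if j' = j then 1 else 0) = 0"
    using \<open>x j \<noteq> 0\<close>
    by (intro critical_point_W_imp_dG_eq_0[OF crit, of "\<bar>x j\<bar>" "\<lambda>_. U" "\<lambda>t. x(j := x j + t)"])
       (auto intro!: derivative_eq_intros)
  then show ?thesis
    using j by (simp add: gradx_eq_dG_dx dG_def if_distrib[of "\<lambda>u. u * _"] cong: if_cong)
qed


lemma critical_stiefel_mode_gradient:
  assumes crit: "critical_point_W k s n r A U x" and W: "in_W k s n r U x"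
    and i: "i < s" "s \<le> k" and a: "a < n i" and j: "j < r"
  shows "dG_dU k n r A U x i a j = (\<Sum>l<r. U i a l * (\<Sum>b<n i. U i b l * dG_dU k n r A U x i b j))"
proof (rule critical_gradient_in_column_span[OF crit W _ j _ a])
  let ?G = "dG_dU k n r A U x"
  let ?P = "\<lambda>l. \<Sum>b<n i. U i b l * ?G i b j"
  have orth: "col_inner n U i l m = (if l = m then 1 else 0)" if "l < r" "m < r" for l m
    using W i that unfolding in_W_def is_stiefel_def by blast
  have expand: "(\<Sum>b<n i. (\<Sum>l<r. U i b l * c l) * U i b m) = (\<Sum>l<r. c l * col_inner n U i l m)"
    for c :: "nat \<Rightarrow> real" and m
    unfolding col_inner_def
    by (simp add: sum_distrib_left sum_distrib_right algebra_simps sum.swap[of _ "{..<n i}"])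
  fix m assume m: "m < r"
  have "(\<Sum>b<n i. (\<Sum>l<r. U i b l * ?P l) * U i b m) = (\<Sum>l<r. ?P l * col_inner n U i l m)"
    by (rule expand)
  also have "(\<Sum>l<r. ?P l * col_inner n U i l m) = ?P m"
    using m by (simp add: orth if_distrib[of "\<lambda>u. _ * u"] cong: if_cong)
  moreover have "(\<Sum>b<n i. ?G i b j * U i b m) = ?P m"
    by (simp add: mult.commute)
  ultimately show "(\<Sum>b<n i. (?G i b j - (\<Sum>l<r. U i b l * ?P l)) * U i b m) = 0"
    by (simp add: left_diff_distrib sum_subtractf)
qed (use i in simp)

lemma critical_oblique_mode_gradient:
  assumes crit: "critical_point_W k s n r A U x" and W: "in_W k s n r U x"
    and i: "s \<le> i" "i < k" and a: "a < n i" and j: "j < r"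
  shows "dG_dU k n r A U x i a j = U i a j * (\<Sum>b<n i. U i b j * dG_dU k n r A U x i b j)"
proof -
  let ?G = "dG_dU k n r A U x"
  let ?p = "\<Sum>b<n i. U i b j * ?G i b j"
  have span: "(\<Sum>l<r. U i b l * (if l = j then ?p else 0)) = U i b j * ?p" for b
    using j by (simp add: if_distrib[of "\<lambda>u. _ * u"] cong: if_cong)
  have "(\<Sum>b<n i. U i b m * ?G i b j) = col_inner n U i j m * ?p" if "m < r" for m
  proof (cases "m = j")
    case True
    then show ?thesis
      using in_W_col_inner_same[OF W \<open>i < k\<close> j] by simp
  next
    case False
    have "(\<Sum>b<n i. (U i b m - col_inner n U i j m * U i b j) * ?G i b j)
        = (\<Sum>b<n i. U i b m * ?G i b j) - col_inner n U i j m * ?p"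
      by (simp add: left_diff_distrib sum_subtractf sum_distrib_left mult.assoc)
    with critical_oblique_column_mix[OF crit W i j \<open>m < r\<close> False] show ?thesis
      by simp
  qed
  moreover have "(\<Sum>b<n i. (?G i b j - U i b j * q) * U i b m)
      = (\<Sum>b<n i. U i b m * ?G i b j) - col_inner n U i j m * q" for m q
    unfolding col_inner_def by (simp add: algebra_simps sum_subtractf sum_distrib_left)
  ultimately have "(\<Sum>b<n i. (?G i b j - (\<Sum>l<r. U i b l * (if l = j then ?p else 0))) * U i b m) = 0"
    if "m < r" for m
    using that by (simp add: span)
  from critical_gradient_in_column_span[OF crit W \<open>i < k\<close> j this a]
  show ?thesis
    by (simp add: span)
qed

lemma critical_point_W_imp_KKT_point:
  assumes "s \<le> k" and crit: "critical_point_W k s n r A U x"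
  shows "KKT_point k s n r A U x"
proof -
  have W: "in_W k s n r U x"
    using crit by (simp add: critical_point_W_def)
  define P where "P i l j = (\<Sum>a<n i. U i a l * dG_dU k n r A U x i a j)" for i l j
  define p where "p i j = (\<Sum>a<n i. U i a j * dG_dU k n r A U x i a j)" for i j
  have "P i j l = P i l j" if "i < s" "j < r" "l < r" for i j l
  proof (cases "j = l")
    case False
    then show ?thesis
      using critical_givens_rotation[OF crit W \<open>i < s\<close> \<open>s \<le> k\<close> \<open>j < r\<close> \<open>l < r\<close>]
      unfolding P_def by metis
  qed simp
  moreover have "gradU k n r A U x i a j = (\<Sum>l<r. U i a l * P i l j)"
    if "i < s" "a < n i" "j < r" for i a j
  proof -
    have "i < k"
      using that \<open>s \<le> k\<close> by simp
    show ?thesis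
      unfolding gradU_eq_dG_dU[of i k a n j r A U x, OF \<open>i < k\<close> that(2,3)] P_def
      by (rule critical_stiefel_mode_gradient[OF crit W \<open>i < s\<close> \<open>s \<le> k\<close> that(2,3)])
  qed
  moreover have "gradU k n r A U x i a j = U i a j * p i j"
    if "s \<le> i" "i < k" "a < n i" "j < r" for i a j
    unfolding gradU_eq_dG_dU[of i k a n j r A U x, OF that(2-4)] p_def
    by (rule critical_oblique_mode_gradient[OF crit W that])
  moreover have "feasible_LRPOTA k s n r U"
    using W by (simp add: in_W_def feasible_LRPOTA_def)
  ultimately show ?thesis
    unfolding KKT_point_def using critical_point_W_imp_gradx_eq_0[OF crit W] by blast
qed

theorem proposition4p5:
  fixes k s r :: nat and n :: "nat \<Rightarrow> nat" and A :: "(nat \<Rightarrow> nat) \<Rightarrow> real"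
    and U :: "nat \<Rightarrow> nat \<Rightarrow> nat \<Rightarrow> real" and x :: "nat \<Rightarrow> real"
  assumes "1 \<le> s" and "s \<le> k" and "\<forall>i<k. r \<le> n i"
    and "in_W k s n r U x"
  shows "critical_point_W k s n r A U x \<longleftrightarrow> KKT_point k s n r A U x"
  using KKT_point_imp_critical_point_W[OF assms(4)] critical_point_W_imp_KKT_point[OF assms(2)]
  by blast

end
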